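(* There is an absolute constant $C$ such that for all integers $n,k,d\ge1$, the function $\textsc{Word}_{S_n,k}$ is computed by $S_n^{k-1}$-invariant $\Sigma_{d+1}$ and $\Pi_{d+1}$ formulas of size at most $n^{C\,d\,k^{1/d}}$. In particular, $\textsc{Word}_{S_n,k}$ has $S_n^{k-1}$-invariant $\mathsf{AC}$ formulas of size $n^{O(\log k)}$ and depth $O(\log k)$.
   Context: $\textsc{Word}_{S_n,k}:\overline{S_n}^k\subseteq\{0,1\}^{kn^2}\to\{0,1\}$ maps a $k$-tuple of $n\times n$ permutation matrices to the $(1,1)$-entry of their product; the variables are the entries $M_{i,a,b}$. $S_n^{k-1}$ acts on variables by $(g_1,\dots,g_{k-1})\cdot M_{i,a,b}=M_{i,g_{i-1}(a),g_i(b)}$ with $g_0=g_k=1$. $\mathsf{AC}$ formulas are rooted trees with unordered children. Leaves are labeled $0,1,x_i,\neg x_i$, and gates are unbounded fan-in $\textsc{and}$/$\textsc{or}$. $\Sigma_{d+1}$ (resp. $\Pi_{d+1}$) formulas are those of depth at most $d+1$ with output gate $\textsc{or}$ (resp. $\textsc{and}$). Size is the number of literal leaves. $P$-invariance means invariance of the labeled tree under relabeling literals by every $\pi\in P$. *)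

theory Defs
  imports Complex_Main "HOL-Library.Multiset" "HOL-Combinatorics.Permutations"
begin

text \<open>AC formulas: rooted trees with unordered children (multisets of subformulas).
  Leaves are constants 0/1 (Const) or literals x / not x (Lit True x / Lit False x).\<close>
datatype 'v acf =
    Const bool
  | Lit bool 'v
  | AND "'v acf multiset"
  | OR "'v acf multiset"

primrec eval :: "('v \<Rightarrow> bool) \<Rightarrow> 'v acf \<Rightarrow> bool" where
  "eval \<sigma> (Const b) = b"
| "eval \<sigma> (Lit p x) = (if p then \<sigma> x else \<not> \<sigma> x)"
| "eval \<sigma> (AND S) = (\<forall>b \<in># image_mset (eval \<sigma>) S. b)"
| "eval \<sigma> (OR S) = (\<exists>b \<in># image_mset (eval \<sigma>) S. b)"

primrec fsize :: "'v acf \<Rightarrow> nat" where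
  "fsize (Const b) = 0"
| "fsize (Lit p x) = 1"
| "fsize (AND S) = sum_mset (image_mset fsize S)"
| "fsize (OR S) = sum_mset (image_mset fsize S)"

primrec depth :: "'v acf \<Rightarrow> nat" where
  "depth (Const b) = 0"
| "depth (Lit p x) = 0"
| "depth (AND S) = Suc (Max (insert 0 (set_mset (image_mset depth S))))"
| "depth (OR S) = Suc (Max (insert 0 (set_mset (image_mset depth S))))"

definition is_Sigma :: "nat \<Rightarrow> 'v acf \<Rightarrow> bool" where
  "is_Sigma D F \<longleftrightarrow> depth F \<le> D \<and> (\<exists>S. F = OR S)"

definition is_Pi :: "nat \<Rightarrow> 'v acf \<Rightarrow> bool" where
  "is_Pi D F \<longleftrightarrow> depth F \<le> D \<and> (\<exists>S. F = AND S)"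

text \<open>Variables M_{i,a,b}, 1 \<le> i \<le> k, 1 \<le> a,b \<le> n, encoded as triples (i,a,b).\<close>
type_synonym var = "nat \<times> nat \<times> nat"

definition valid_vars :: "nat \<Rightarrow> nat \<Rightarrow> var set" where
  "valid_vars n k = {(i,a,b). 1 \<le> i \<and> i \<le> k \<and> 1 \<le> a \<and> a \<le> n \<and> 1 \<le> b \<and> b \<le> n}"

definition is_perm_matrix :: "nat \<Rightarrow> (nat \<Rightarrow> nat \<Rightarrow> bool) \<Rightarrow> bool" where
  "is_perm_matrix n P \<longleftrightarrow>
     (\<forall>a\<in>{1..n}. \<exists>!b. b \<in> {1..n} \<and> P a b) \<and> (\<forall>b\<in>{1..n}. \<exists>!a. a \<in> {1..n} \<and> P a b)"

definition in_domain :: "nat \<Rightarrow> nat \<Rightarrow> (var \<Rightarrow> bool) \<Rightarrow> bool" where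
  "in_domain n k M \<longleftrightarrow> (\<forall>i\<in>{1..k}. is_perm_matrix n (\<lambda>a b. M (i,a,b)))"

fun prodmat :: "nat \<Rightarrow> (var \<Rightarrow> bool) \<Rightarrow> nat \<Rightarrow> nat \<Rightarrow> nat \<Rightarrow> int" where
  "prodmat n M 0 a b = (if a = b then 1 else 0)"
| "prodmat n M (Suc j) a b = (\<Sum>c=1..n. prodmat n M j a c * (if M (Suc j, c, b) then 1 else 0))"

definition Word :: "nat \<Rightarrow> nat \<Rightarrow> (var \<Rightarrow> bool) \<Rightarrow> bool" where
  "Word n k M \<longleftrightarrow> prodmat n M k 1 1 = 1"

text \<open>Group S_n^{k-1}: tuples (g_1,...,g_{k-1}) of permutations of {1..n}; g_0 = g_k = 1.\<close>
definition group_elem :: "nat \<Rightarrow> nat \<Rightarrow> (nat \<Rightarrow> nat \<Rightarrow> nat) \<Rightarrow> bool" where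
  "group_elem n k g \<longleftrightarrow> (\<forall>j\<in>{1..<k}. g j permutes {1..n})"

definition gcomp :: "nat \<Rightarrow> (nat \<Rightarrow> nat \<Rightarrow> nat) \<Rightarrow> nat \<Rightarrow> nat \<Rightarrow> nat" where
  "gcomp k g j = (if j = 0 \<or> j = k then id else g j)"

definition act :: "nat \<Rightarrow> (nat \<Rightarrow> nat \<Rightarrow> nat) \<Rightarrow> var \<Rightarrow> var" where
  "act k g v = (case v of (i,a,b) \<Rightarrow> (i, gcomp k g (i - 1) a, gcomp k g i b))"

definition invariant :: "nat \<Rightarrow> nat \<Rightarrow> var acf \<Rightarrow> bool" where
  "invariant n k F \<longleftrightarrow> (\<forall>g. group_elem n k g \<longrightarrow> map_acf (act k g) F = F)"

definition computes_word :: "nat \<Rightarrow> nat \<Rightarrow> var acf \<Rightarrow> bool" where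
  "computes_word n k F \<longleftrightarrow> set_acf F \<subseteq> valid_vars n k \<and>
     (\<forall>M. in_domain n k M \<longrightarrow> (eval M F \<longleftrightarrow> Word n k M))"

end

(* An entry (a, b) of a product M_(s+1) ... M_t of permutation matrices is 1 iff the composed
   permutation maps a to b.  Cut (s, t] into at most m blocks of length m^(l-1).  A Sigma_(l+1)
   formula guesses the labels at the block boundaries and asks each block to map its label to
   the next one, a Pi_l condition; a Pi_(l+1) formula says that a reaches no b' other than b,
   i.e. for every such b' and every choice of boundary labels some block fails, and a block
   fails to map c to c' iff it maps c to some c'' other than c', a Sigma_l condition.  Merging
   gates of equal type keeps the depth at l + 1 and each level multiplies the size by at most
   m n^(m+1).  The group element g only relabels the boundary labels by g_i, so it permutes the
   arguments of every gate and the formulas are invariant.  Finally m = ceil(k^(1/d)) gives size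
   n^(O(d k^(1/d))), and d = ceil(log k) gives the logarithmic depth bound. *)

theory Submission
  imports Defs
begin

fun gate :: "bool \<Rightarrow> 'v acf multiset \<Rightarrow> 'v acf" where
  "gate True = OR"
| "gate False = AND"

lemma image_mset_sum: "image_mset h (\<Sum>c\<in>A. f c) = (\<Sum>c\<in>A. image_mset h (f c))"
  by (induction A rule: infinite_finite_induct) auto

lemma size_sum: "size (\<Sum>c\<in>A. f c :: 'x multiset) = (\<Sum>c\<in>A. size (f c))"
  by (induction A rule: infinite_finite_induct) auto

lemma sum_mset_image_sum: "(\<Sum>x\<in>#(\<Sum>c\<in>A. f c). w x) = (\<Sum>c\<in>A. \<Sum>x\<in>#f c. w x)"
  by (induction A rule: infinite_finite_induct) auto

lemma image_mset_sum_Diff_permutes: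
  assumes "\<sigma> permutes A" "c \<in> A" "\<And>c'. c' \<in> A \<Longrightarrow> image_mset h (F c') = G (\<sigma> c')"
  shows "image_mset h (\<Sum>c'\<in>A - {c}. F c') = (\<Sum>c'\<in>A - {\<sigma> c}. G c')"
proof -
  have "image_mset h (\<Sum>c'\<in>A - {c}. F c') = (\<Sum>c'\<in>A - {c}. G (\<sigma> c'))"
    unfolding image_mset_sum using assms(3) by (intro sum.cong) auto
  also have "\<dots> = (\<Sum>c'\<in>A - {\<sigma> c}. G c')"
  proof (rule sum.reindex_bij_betw)
    show "bij_betw \<sigma> (A - {c}) (A - {\<sigma> c})"
      using assms(1,2) by (intro bij_betw_DiffI)
        (auto simp: permutes_imp_bij permutes_in_image permutes_inj_on permutes_image bij_betw_def)
  qed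
  finally show ?thesis .
qed

lemma all_not_sum_Diff_iff:
  assumes "finite A" "x \<in> A" "c \<in> A" "\<And>c'. c' \<in> A \<Longrightarrow> (\<exists>y\<in>#F c'. P y) \<longleftrightarrow> x = c'"
  shows "(\<forall>y\<in>#(\<Sum>c'\<in>A - {c}. F c'). \<not> P y) \<longleftrightarrow> x = c"
proof -
  have "(\<forall>y\<in>#(\<Sum>c'\<in>A - {c}. F c'). \<not> P y) \<longleftrightarrow> (\<forall>c'\<in>A - {c}. \<not> (\<exists>y\<in>#F c'. P y))"
    using assms(1) by (auto simp: set_mset_sum)
  also have "\<dots> \<longleftrightarrow> x = c"
    using assms(2-4) by auto
  finally show ?thesis .
qed

lemma sum_mset_sum_Diff_le:
  fixes w :: "'x \<Rightarrow> nat"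
  assumes "\<And>c'. c' \<in> {1..n} - {c} \<Longrightarrow> (\<Sum>y\<in>#F c'. w y) \<le> S"
  shows "(\<Sum>y\<in>#(\<Sum>c'\<in>{1..n} - {c}. F c'). w y) \<le> n * S"
proof -
  have "(\<Sum>y\<in>#(\<Sum>c'\<in>{1..n} - {c}. F c'). w y) \<le> card ({1..n} - {c}) * S"
    unfolding sum_mset_image_sum using sum_bounded_above[of "{1..n} - {c}" "\<lambda>c'. \<Sum>y\<in>#F c'. w y" S] assms
    by simp
  also have "\<dots> \<le> n * S"
    using card_Diff1_le[of "{1..n}" c] by (intro mult_le_mono1) simp
  finally show ?thesis .
qed

text \<open>For \<open>ps = [p0, p1, ..., pL]\<close>, \<open>paths n f ps a b\<close> has one element for each choice of
  labels \<open>c1, ..., c(L-1)\<close> in \<open>{1..n}\<close>, namely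
  \<open>f p0 p1 a c1 + f p1 p2 c1 c2 + ... + f p(L-1) pL c(L-1) b\<close>.\<close>
fun paths :: "nat \<Rightarrow> (nat \<Rightarrow> nat \<Rightarrow> nat \<Rightarrow> nat \<Rightarrow> 'x multiset) \<Rightarrow> nat list \<Rightarrow> nat \<Rightarrow> nat \<Rightarrow> 'x multiset multiset" where
  "paths n f [p, p'] a b = {#f p p' a b#}"
| "paths n f (p # p' # p'' # ps) a b =
     (\<Sum>c\<in>{1..n}. image_mset ((+) (f p p' a c)) (paths n f (p' # p'' # ps) c b))"
| "paths n f _ a b = {#}"

lemma mem_paths:
  assumes "successively V ps" "X \<in># paths n f ps a b" "x \<in># X" "a \<in> {1..n}" "b \<in> {1..n}"
  shows "\<exists>p p' c c'. V p p' \<and> c \<in> {1..n} \<and> c' \<in> {1..n} \<and> x \<in># f p p' c c'"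
  using assms
proof (induction n f ps a b arbitrary: X rule: paths.induct)
  case (2 n f p p' p'' ps a b)
  then obtain c Y where "c \<in> {1..n}" "Y \<in># paths n f (p' # p'' # ps) c b" "X = f p p' a c + Y"
    by (auto simp: set_mset_sum)
  then show ?case using "2.IH" "2.prems" by fastforce
qed auto

lemma size_paths: "2 \<le> length ps \<Longrightarrow> size (paths n f ps a b) = n ^ (length ps - 2)"
  by (induction n f ps a b rule: paths.induct) (auto simp: size_sum)

lemma paths_weight_le:
  fixes w :: "'x \<Rightarrow> nat"
  assumes "successively V ps" "2 \<le> length ps" "a \<in> {1..n}" "b \<in> {1..n}"
    and "\<And>p p' c c'. V p p' \<Longrightarrow> c \<in> {1..n} \<Longrightarrow> c' \<in> {1..n} \<Longrightarrow> (\<Sum>x\<in>#f p p' c c'. w x) \<le> S"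
  shows "(\<Sum>X\<in>#paths n f ps a b. \<Sum>x\<in>#X. w x) \<le> n ^ (length ps - 2) * (length ps - 1) * S"
  using assms
proof (induction n f ps a b rule: paths.induct)
  case (2 n f p p' p'' ps a b)
  let ?W = "\<lambda>X. \<Sum>x\<in>#X. w x"
  let ?P = "\<lambda>c. paths n f (p' # p'' # ps) c b"
  have "(\<Sum>X\<in>#paths n f (p # p' # p'' # ps) a b. ?W X)
      = (\<Sum>c\<in>{1..n}. size (?P c) * ?W (f p p' a c) + (\<Sum>Y\<in>#?P c. ?W Y))"
    by (simp add: sum_mset_image_sum multiset.map_comp comp_def sum_mset.distrib)
  also have "\<dots> \<le> (\<Sum>c\<in>{1..n}. n ^ length ps * S + n ^ length ps * (length ps + 1) * S)"
  proof (intro sum_mono add_mono)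
    fix c assume c: "c \<in> {1..n}"
    have "size (?P c) = n ^ length ps"
      using size_paths[of "p' # p'' # ps"] by simp
    then show "size (?P c) * ?W (f p p' a c) \<le> n ^ length ps * S"
      using "2.prems" c by simp
    show "(\<Sum>Y\<in>#?P c. ?W Y) \<le> n ^ length ps * (length ps + 1) * S"
      using "2.IH"[OF c] "2.prems" c by simp
  qed
  also have "\<dots> = n ^ (length (p # p' # p'' # ps) - 2) * (length (p # p' # p'' # ps) - 1) * S"
    by (simp add: algebra_simps)
  finally show ?case .
qed auto

lemma image_paths:
  assumes "successively V ps" "a \<in> {1..n}" "b \<in> {1..n}"
    and "\<And>p p'. V p p' \<Longrightarrow> \<pi> p' permutes {1..n}"
    and "\<And>p p' c c'. V p p' \<Longrightarrow> c \<in> {1..n} \<Longrightarrow> c' \<in> {1..n} \<Longrightarrow>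
      image_mset h (f p p' c c') = f p p' (\<pi> p c) (\<pi> p' c')"
  shows "image_mset (image_mset h) (paths n f ps a b) = paths n f ps (\<pi> (hd ps) a) (\<pi> (last ps) b)"
  using assms
proof (induction n f ps a b rule: paths.induct)
  case (2 n f p p' p'' ps a b)
  let ?Q = "paths n f (p' # p'' # ps)"
  let ?b = "\<pi> (last (p'' # ps)) b"
  have "image_mset (image_mset h) (paths n f (p # p' # p'' # ps) a b)
      = (\<Sum>c\<in>{1..n}. image_mset ((+) (image_mset h (f p p' a c))) (image_mset (image_mset h) (?Q c b)))"
    by (simp add: image_mset_sum multiset.map_comp comp_def)
  also have "\<dots> = (\<Sum>c\<in>{1..n}. image_mset ((+) (f p p' (\<pi> p a) (\<pi> p' c))) (?Q (\<pi> p' c) ?b))"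
    using "2.IH" "2.prems" by (intro sum.cong refl) simp
  also have "\<dots> = (\<Sum>c\<in>{1..n}. image_mset ((+) (f p p' (\<pi> p a) c)) (?Q c ?b))"
    using "2.prems" by (intro sum.reindex_bij_betw permutes_imp_bij) auto
  finally show ?case by simp
qed auto

lemma hd_le_last_successively:
  fixes ps :: "'a::preorder list"
  shows "successively V ps \<Longrightarrow> (\<And>p p'. V p p' \<Longrightarrow> p \<le> p') \<Longrightarrow> ps \<noteq> [] \<Longrightarrow> hd ps \<le> last ps"
proof (induction ps rule: induct_list012)
  case (3 x y zs)
  then have "x \<le> y" "y \<le> last (y # zs)" by simp_all
  then show ?case by (auto split: if_splits intro: order_trans)
qed simp_all

lemma ex_paths_iff:
  assumes "successively V ps" "2 \<le> length ps" "a \<in> {1..n}" "b \<in> {1..n}"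
    and "\<And>p p'. V p p' \<Longrightarrow> p \<le> p'"
    and "\<And>p p' c c'. V p p' \<Longrightarrow> c \<in> {1..n} \<Longrightarrow> c' \<in> {1..n} \<Longrightarrow>
      (\<forall>x\<in>#f p p' c c'. P x) \<longleftrightarrow> R p p' c = c'"
    and "\<And>p p' c. V p p' \<Longrightarrow> c \<in> {1..n} \<Longrightarrow> R p p' c \<in> {1..n}"
    and "\<And>p p' p'' c. p \<le> p' \<Longrightarrow> p' \<le> p'' \<Longrightarrow> R p' p'' (R p p' c) = R p p'' c"
  shows "(\<exists>X\<in>#paths n f ps a b. \<forall>x\<in>#X. P x) \<longleftrightarrow> R (hd ps) (last ps) a = b"
  using assms
proof (induction n f ps a b rule: paths.induct)
  case (2 n f p p' p'' ps a b)
  let ?q = "last (p'' # ps)"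
  have "p' \<le> ?q"
    using hd_le_last_successively[of V "p' # p'' # ps"] "2.prems"(1,5) by auto
  have piece: "(\<forall>x\<in>#f p p' a c. P x) \<and> (\<exists>Y\<in>#paths n f (p' # p'' # ps) c b. \<forall>x\<in>#Y. P x)
      \<longleftrightarrow> R p p' a = c \<and> R p' ?q c = b" if "c \<in> {1..n}" for c
    using "2.IH"[OF that] "2.prems" that by simp
  have "(\<exists>X\<in>#paths n f (p # p' # p'' # ps) a b. \<forall>x\<in>#X. P x)
      \<longleftrightarrow> (\<exists>c\<in>{1..n}. (\<forall>x\<in>#f p p' a c. P x) \<and> (\<exists>Y\<in>#paths n f (p' # p'' # ps) c b. \<forall>x\<in>#Y. P x))"
    by (auto simp: set_mset_sum)
  also have "\<dots> \<longleftrightarrow> (\<exists>c\<in>{1..n}. R p p' a = c \<and> R p' ?q c = b)"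
    using piece by (intro bex_cong refl)
  also have "\<dots> \<longleftrightarrow> R p ?q a = b"
    using "2.prems" \<open>p' \<le> ?q\<close> by auto
  finally show ?case by simp
qed auto

function breakpoints :: "nat \<Rightarrow> nat \<Rightarrow> nat \<Rightarrow> nat list" where
  "breakpoints q s t = (if q = 0 \<or> t \<le> s + q then [s, t] else s # breakpoints q (s + q) t)"
  by auto
termination by (relation "measure (\<lambda>(q, s, t). t - s)") auto

declare breakpoints.simps [simp del]

lemma breakpoints_base: "q = 0 \<or> t \<le> s + q \<Longrightarrow> breakpoints q s t = [s, t]"
  by (simp add: breakpoints.simps)

lemma breakpoints_step: "0 < q \<Longrightarrow> s + q < t \<Longrightarrow> breakpoints q s t = s # breakpoints q (s + q) t"
  by (subst breakpoints.simps) simp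

lemma breakpoints_ends:
  "2 \<le> length (breakpoints q s t) \<and> hd (breakpoints q s t) = s \<and> last (breakpoints q s t) = t"
proof (induction q s t rule: breakpoints.induct)
  case (1 q s t)
  then show ?case
    by (cases "q = 0 \<or> t \<le> s + q") (auto simp: breakpoints_base breakpoints_step)
qed

lemma successively_breakpoints:
  "s\<^sub>0 \<le> s \<Longrightarrow> s < t \<Longrightarrow> 0 < q \<Longrightarrow>
    successively (\<lambda>p p'. s\<^sub>0 \<le> p \<and> p < p' \<and> p' - p \<le> q \<and> p' \<le> t) (breakpoints q s t)"
proof (induction q s t rule: breakpoints.induct)
  case (1 q s t)
  show ?case
  proof (cases "t \<le> s + q")
    case True
    then show ?thesis using "1.prems" by (simp add: breakpoints_base)
  next
    case False
    then obtain ps where "breakpoints q (s + q) t = (s + q) # ps"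
      using breakpoints_ends[of q "s + q" t] by (cases "breakpoints q (s + q) t") auto
    then show ?thesis using "1" False by (simp add: breakpoints_step)
  qed
qed

lemma length_breakpoints_le:
  "0 < q \<Longrightarrow> s < t \<Longrightarrow> t - s \<le> m * q \<Longrightarrow> length (breakpoints q s t) \<le> m + 1"
proof (induction q s t arbitrary: m rule: breakpoints.induct)
  case (1 q s t)
  show ?case
  proof (cases "t \<le> s + q")
    case True
    then have "1 \<le> m" using "1.prems" by (cases m) auto
    then show ?thesis using True by (simp add: breakpoints_base)
  next
    case False
    then have "t - (s + q) \<le> (m - 1) * q" using "1.prems" by (simp add: diff_mult_distrib)
    then have "length (breakpoints q (s + q) t) \<le> m" using "1" False by fastforce
    then show ?thesis using False "1.prems" by (simp add: breakpoints_step)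
  qed
qed

lemma breakpoints_blocks:
  assumes "s < t" "t - s \<le> m * q"
  shows "successively (\<lambda>p p'. s \<le> p \<and> p < p' \<and> p' - p \<le> q \<and> p' \<le> t) (breakpoints q s t)"
    and "2 \<le> length (breakpoints q s t)" "length (breakpoints q s t) \<le> m + 1"
    and "hd (breakpoints q s t) = s" "last (breakpoints q s t) = t"
proof -
  have "0 < q" using assms by (cases q) auto
  then show "successively (\<lambda>p p'. s \<le> p \<and> p < p' \<and> p' - p \<le> q \<and> p' \<le> t) (breakpoints q s t)"
    and "length (breakpoints q s t) \<le> m + 1"
    using assms successively_breakpoints length_breakpoints_le by auto
qed (use breakpoints_ends in auto)

definition walk :: "(nat \<Rightarrow> 'a \<Rightarrow> 'a) \<Rightarrow> nat \<Rightarrow> nat \<Rightarrow> 'a \<Rightarrow> 'a" where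
  "walk \<sigma> s t = fold \<sigma> [Suc s..<Suc t]"

lemma walk_trans: "s \<le> u \<Longrightarrow> u \<le> t \<Longrightarrow> walk \<sigma> u t (walk \<sigma> s u a) = walk \<sigma> s t a"
proof -
  assume "s \<le> u" "u \<le> t"
  then have "[Suc s..<Suc t] = [Suc s..<Suc u] @ [Suc u..<Suc t]"
    using upt_add_eq_append[of "Suc s" "Suc u" "t - u"] by simp
  then show ?thesis by (simp add: walk_def)
qed

lemma walk_Suc: "walk \<sigma> s (Suc s) = \<sigma> (Suc s)"
  by (simp add: walk_def fun_eq_iff)

lemma walk_in:
  "(\<And>i x. s < i \<Longrightarrow> i \<le> t \<Longrightarrow> x \<in> A \<Longrightarrow> \<sigma> i x \<in> A) \<Longrightarrow> a \<in> A \<Longrightarrow> walk \<sigma> s t a \<in> A"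
  unfolding walk_def by (rule fold_invariant[where Q = "\<lambda>i. s < i \<and> i \<le> t"]) auto

text \<open>\<open>gate sg (reach_args n m l sg s t a b)\<close> is the \<open>Sigma_(l+1)\<close> (if \<open>sg\<close>) or \<open>Pi_(l+1)\<close>
  formula stating that \<open>M_(s+1) ... M_t\<close> has a \<open>1\<close> at \<open>(a, b)\<close>, provided \<open>t - s \<le> m ^ l\<close>.
  Recursing on the arguments of the top gate rather than on the formula itself is what merges
  gates of equal type.\<close>
primrec reach_args :: "nat \<Rightarrow> nat \<Rightarrow> nat \<Rightarrow> bool \<Rightarrow> nat \<Rightarrow> nat \<Rightarrow> nat \<Rightarrow> nat \<Rightarrow> var acf multiset" where
  "reach_args n m 0 sg s t a b = {#Lit True (t, a, b)#}"
| "reach_args n m (Suc l) sg s t a b =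
    (if sg then image_mset AND (paths n (\<lambda>p p'. reach_args n m l False p p') (breakpoints (m ^ l) s t) a b)
     else image_mset OR (\<Sum>b'\<in>{1..n} - {b}.
       paths n (\<lambda>p p' c c'. \<Sum>c''\<in>{1..n} - {c'}. reach_args n m l True p p' c c'')
         (breakpoints (m ^ l) s t) a b'))"

lemma mem_reach_args_Suc:
  assumes "x \<in># reach_args n m (Suc l) sg s t a b" "s < t" "t - s \<le> m ^ Suc l"
    and "a \<in> {1..n}" "b \<in> {1..n}"
  obtains X where "x = AND X \<or> x = OR X"
    and "\<And>y. y \<in># X \<Longrightarrow> \<exists>p p' c c' sg'. s \<le> p \<and> p < p' \<and> p' - p \<le> m ^ l \<and> p' \<le> t \<and>
      c \<in> {1..n} \<and> c' \<in> {1..n} \<and> y \<in># reach_args n m l sg' p p' c c'"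
proof -
  let ?ps = "breakpoints (m ^ l) s t"
  let ?V = "\<lambda>p p'. s \<le> p \<and> p < p' \<and> p' - p \<le> m ^ l \<and> p' \<le> t"
  have V: "successively ?V ?ps"
    using breakpoints_blocks(1)[of s t m "m ^ l"] assms(2,3) by simp
  show ?thesis
  proof (cases sg)
    case True
    then obtain X where "x = AND X" and X: "X \<in># paths n (\<lambda>p p'. reach_args n m l False p p') ?ps a b"
      using assms(1) by auto
    moreover have "\<exists>p p' c c' sg'. ?V p p' \<and> c \<in> {1..n} \<and> c' \<in> {1..n} \<and> y \<in># reach_args n m l sg' p p' c c'"
      if y: "y \<in># X" for y
      using mem_paths[OF V X y assms(4,5)] by blast
    ultimately show ?thesis using that by blast
  next
    case False
    let ?f = "\<lambda>p p' c c'. \<Sum>c''\<in>{1..n} - {c'}. reach_args n m l True p p' c c''"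
    obtain X where "x = OR X" and "X \<in># (\<Sum>b'\<in>{1..n} - {b}. paths n ?f ?ps a b')"
      using assms(1) False by auto
    moreover from this(2) obtain b' where b': "b' \<in> {1..n}" and X: "X \<in># paths n ?f ?ps a b'"
      by (auto simp only: set_mset_sum finite_Diff finite_atLeastAtMost UN_iff DiffE)
    moreover have "\<exists>p p' c c' sg'. ?V p p' \<and> c \<in> {1..n} \<and> c' \<in> {1..n} \<and> y \<in># reach_args n m l sg' p p' c c'"
      if y: "y \<in># X" for y
    proof -
      obtain p p' c c' where "?V p p'" "c \<in> {1..n}" and "c' \<in> {1..n}" "y \<in># ?f p p' c c'"
        using mem_paths[OF V X y assms(4) b'] by blast
      moreover from this(4) obtain c'' where "c'' \<in> {1..n}" "y \<in># reach_args n m l True p p' c c''"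
        by (auto simp only: set_mset_sum finite_Diff finite_atLeastAtMost UN_iff DiffE)
      ultimately show ?thesis by blast
    qed
    ultimately show ?thesis using that by blast
  qed
qed

lemma reach_args_depth_vars:
  assumes "s < t" "t \<le> k" "t - s \<le> m ^ l" "a \<in> {1..n}" "b \<in> {1..n}"
    and "x \<in># reach_args n m l sg s t a b"
  shows "depth x \<le> l \<and> set_acf x \<subseteq> valid_vars n k"
  using assms
proof (induction l arbitrary: sg s t a b x)
  case 0
  then show ?case by (auto simp: valid_vars_def)
next
  case (Suc l)
  obtain X where x: "x = AND X \<or> x = OR X"
    and X: "\<And>y. y \<in># X \<Longrightarrow> \<exists>p p' c c' sg'. s \<le> p \<and> p < p' \<and> p' - p \<le> m ^ l \<and> p' \<le> t \<and>
      c \<in> {1..n} \<and> c' \<in> {1..n} \<and> y \<in># reach_args n m l sg' p p' c c'"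
    using mem_reach_args_Suc[OF Suc.prems(6,1,3-5)] by blast
  have "\<forall>y\<in>#X. depth y \<le> l \<and> set_acf y \<subseteq> valid_vars n k"
  proof
    fix y assume "y \<in># X"
    from X[OF this] obtain p p' c c' sg' where "p < p'" "p' \<le> t" "p' - p \<le> m ^ l"
      "c \<in> {1..n}" "c' \<in> {1..n}" "y \<in># reach_args n m l sg' p p' c c'"
      by blast
    then show "depth y \<le> l \<and> set_acf y \<subseteq> valid_vars n k"
      using Suc.IH[of p p' c c' y sg'] Suc.prems(2) by simp
  qed
  with x show ?case by (elim disjE) (auto simp: Max_le_iff)
qed

lemma image_reach_args:
  assumes "\<And>p. s \<le> p \<Longrightarrow> p \<le> t \<Longrightarrow> gcomp k g p permutes {1..n}"
    and "s < t" "t - s \<le> m ^ l" "a \<in> {1..n}" "b \<in> {1..n}"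
  shows "image_mset (map_acf (act k g)) (reach_args n m l sg s t a b)
    = reach_args n m l sg s t (gcomp k g s a) (gcomp k g t b)"
  using assms
proof (induction l arbitrary: sg s t a b)
  case 0
  then have "t = Suc s" by simp
  then show ?case by (simp add: act_def)
next
  case (Suc l)
  let ?\<pi> = "gcomp k g"
  let ?h = "image_mset (map_acf (act k g))"
  let ?ps = "breakpoints (m ^ l) s t"
  let ?V = "\<lambda>p p'. s \<le> p \<and> p < p' \<and> p' - p \<le> m ^ l \<and> p' \<le> t"
  have V: "successively ?V ?ps" and ends: "hd ?ps = s" "last ?ps = t"
    using breakpoints_blocks[of s t m "m ^ l"] Suc.prems by simp_all
  have perm: "?\<pi> p' permutes {1..n}" if "?V p p'" for p p'
    using that Suc.prems(1) by simp
  have IH: "?h (reach_args n m l sg' p p' c c') = reach_args n m l sg' p p' (?\<pi> p c) (?\<pi> p' c')"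
    if "?V p p'" "c \<in> {1..n}" "c' \<in> {1..n}" for p p' c c' sg'
    using Suc.IH[of p p' c c' sg'] that Suc.prems by auto
  show ?case
  proof (cases sg)
    case True
    have "image_mset ?h (paths n (\<lambda>p p'. reach_args n m l False p p') ?ps a b)
      = paths n (\<lambda>p p'. reach_args n m l False p p') ?ps (?\<pi> (hd ?ps) a) (?\<pi> (last ?ps) b)"
      by (intro image_paths[OF V Suc.prems(4,5)] perm IH)
    then have "image_mset AND (image_mset ?h (paths n (\<lambda>p p'. reach_args n m l False p p') ?ps a b))
      = image_mset AND (paths n (\<lambda>p p'. reach_args n m l False p p') ?ps (?\<pi> s a) (?\<pi> t b))"
      by (simp add: ends)
    then show ?thesis using True by (simp add: multiset.map_comp comp_def)
  next
    case False
    let ?f = "\<lambda>p p' c c'. \<Sum>c''\<in>{1..n} - {c'}. reach_args n m l True p p' c c''"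
    have piece: "?h (?f p p' c c') = ?f p p' (?\<pi> p c) (?\<pi> p' c')"
      if V: "?V p p'" and "c \<in> {1..n}" "c' \<in> {1..n}" for p p' c c'
      using IH[OF V] that by (intro image_mset_sum_Diff_permutes[where \<sigma> = "?\<pi> p'", OF perm[OF V]]) auto
    have "image_mset ?h (paths n ?f ?ps a b') = paths n ?f ?ps (?\<pi> (hd ?ps) a) (?\<pi> (last ?ps) b')"
      if "b' \<in> {1..n}" for b'
      by (intro image_paths[OF V Suc.prems(4) that] perm piece)
    then have "image_mset ?h (\<Sum>b'\<in>{1..n} - {b}. paths n ?f ?ps a b')
        = (\<Sum>b'\<in>{1..n} - {?\<pi> t b}. paths n ?f ?ps (?\<pi> s a) b')"
      using Suc.prems by (intro image_mset_sum_Diff_permutes[where \<sigma> = "?\<pi> t"]) (auto simp: ends)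
    then have "image_mset OR (image_mset ?h (\<Sum>b'\<in>{1..n} - {b}. paths n ?f ?ps a b'))
      = image_mset OR (\<Sum>b'\<in>{1..n} - {?\<pi> t b}. paths n ?f ?ps (?\<pi> s a) b')"
      by simp
    then show ?thesis using False by (simp add: multiset.map_comp comp_def)
  qed
qed

lemma eval_reach_args:
  assumes \<sigma>: "\<And>i x. 0 < i \<Longrightarrow> i \<le> k \<Longrightarrow> x \<in> {1..n} \<Longrightarrow> \<sigma> i x \<in> {1..n}"
    and M: "\<And>i x y. 0 < i \<Longrightarrow> i \<le> k \<Longrightarrow> x \<in> {1..n} \<Longrightarrow> y \<in> {1..n} \<Longrightarrow> M (i, x, y) \<longleftrightarrow> \<sigma> i x = y"
    and "s < t" "t \<le> k" "t - s \<le> m ^ l" "a \<in> {1..n}" "b \<in> {1..n}"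
  shows "eval M (gate sg (reach_args n m l sg s t a b)) \<longleftrightarrow> walk \<sigma> s t a = b"
  using assms(3-)
proof (induction l arbitrary: sg s t a b)
  case 0
  then have "t = Suc s" by simp
  then show ?case using M[of t a b] 0 by (cases sg) (simp_all add: walk_Suc)
next
  case (Suc l)
  let ?ps = "breakpoints (m ^ l) s t"
  let ?V = "\<lambda>p p'. s \<le> p \<and> p < p' \<and> p' - p \<le> m ^ l \<and> p' \<le> t"
  have V: "successively ?V ?ps" and len: "2 \<le> length ?ps" and ends: "hd ?ps = s" "last ?ps = t"
    using breakpoints_blocks[of s t m "m ^ l"] Suc.prems by simp_all
  have range: "walk \<sigma> p p' c \<in> {1..n}" if "p' \<le> k" "c \<in> {1..n}" for p p' c
    using walk_in[of p p' "{1..n}" \<sigma> c] \<sigma> that by simp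
  have IH: "eval M (gate sg' (reach_args n m l sg' p p' c c')) \<longleftrightarrow> walk \<sigma> p p' c = c'"
    if "?V p p'" "c \<in> {1..n}" "c' \<in> {1..n}" for p p' c c' sg'
    using Suc.IH[of p p' c c' sg'] that Suc.prems by auto
  show ?case
  proof (cases sg)
    case True
    have "(\<exists>X\<in>#paths n (\<lambda>p p'. reach_args n m l False p p') ?ps a b. \<forall>x\<in>#X. eval M x)
        \<longleftrightarrow> walk \<sigma> (hd ?ps) (last ?ps) a = b"
      using IH[where sg' = False] Suc.prems range
      by (intro ex_paths_iff[OF V len, where R = "walk \<sigma>"]) (auto intro: walk_trans)
    then show ?thesis using True by (simp add: ends)
  next
    case False
    let ?f = "\<lambda>p p' c c'. \<Sum>c''\<in>{1..n} - {c'}. reach_args n m l True p p' c c''"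
    have piece: "(\<forall>x\<in>#?f p p' c c'. \<not> eval M x) \<longleftrightarrow> walk \<sigma> p p' c = c'"
      if "?V p p'" "c \<in> {1..n}" "c' \<in> {1..n}" for p p' c c'
      using IH[OF that(1,2), where sg' = True] range[of p' c] that Suc.prems
      by (intro all_not_sum_Diff_iff) auto
    have "(\<exists>X\<in>#paths n ?f ?ps a b'. \<forall>x\<in>#X. \<not> eval M x) \<longleftrightarrow> walk \<sigma> (hd ?ps) (last ?ps) a = b'"
      if "b' \<in> {1..n}" for b'
      using piece Suc.prems range that
      by (intro ex_paths_iff[OF V len, where R = "walk \<sigma>"]) (auto intro: walk_trans)
    then have "(\<forall>X\<in>#(\<Sum>b'\<in>{1..n} - {b}. paths n ?f ?ps a b'). \<not> (\<forall>x\<in>#X. \<not> eval M x))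
        \<longleftrightarrow> walk \<sigma> s t a = b"
      using range[of t a] Suc.prems by (intro all_not_sum_Diff_iff) (auto simp: ends)
    then show ?thesis using False by simp
  qed
qed

lemma level_factor_le:
  assumes "1 \<le> n" "2 \<le> L" "L \<le> m + 1"
  shows "n * (n ^ (L - 2) * (L - 1)) * n \<le> m * n ^ (m + 1)"
proof -
  obtain j where j: "L = j + 2" using assms(2) by (metis add.commute le_Suc_ex)
  then have "n * (n ^ (L - 2) * (L - 1)) * n = n ^ L * (L - 1)" by (simp add: algebra_simps)
  also have "\<dots> \<le> n ^ (m + 1) * m" using assms by (intro mult_le_mono power_increasing) auto
  finally show ?thesis by (simp add: mult.commute)
qed

lemma fsize_reach_args:
  assumes "s < t" "t - s \<le> m ^ l" "a \<in> {1..n}" "b \<in> {1..n}"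
  shows "(\<Sum>x\<in>#reach_args n m l sg s t a b. fsize x) \<le> (m * n ^ (m + 1)) ^ l"
  using assms
proof (induction l arbitrary: sg s t a b)
  case (Suc l)
  let ?T = "(m * n ^ (m + 1)) ^ l"
  let ?ps = "breakpoints (m ^ l) s t"
  let ?L = "length ?ps"
  let ?V = "\<lambda>p p'. s \<le> p \<and> p < p' \<and> p' - p \<le> m ^ l \<and> p' \<le> t"
  have V: "successively ?V ?ps" and len: "2 \<le> ?L"
    using breakpoints_blocks[of s t m "m ^ l"] Suc.prems by simp_all
  have factor: "n * (n ^ (?L - 2) * (?L - 1)) * n \<le> m * n ^ (m + 1)"
    using level_factor_le len breakpoints_blocks(3)[of s t m "m ^ l"] Suc.prems by auto
  have IH: "(\<Sum>x\<in>#reach_args n m l sg' p p' c c'. fsize x) \<le> ?T"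
    if "?V p p'" "c \<in> {1..n}" "c' \<in> {1..n}" for p p' c c' sg'
    using Suc.IH[of p p' c c' sg'] that by auto
  show ?case
  proof (cases sg)
    case True
    have "(\<Sum>X\<in>#paths n (\<lambda>p p'. reach_args n m l False p p') ?ps a b. \<Sum>x\<in>#X. fsize x)
        \<le> n ^ (?L - 2) * (?L - 1) * ?T"
      using IH by (intro paths_weight_le[OF V len Suc.prems(3,4)])
    also have "\<dots> \<le> n * (n ^ (?L - 2) * (?L - 1)) * n * ?T"
      using Suc.prems(3) by (intro mult_le_mono1) (simp add: mult_le_mono2)
    also have "\<dots> \<le> m * n ^ (m + 1) * ?T"
      using factor by (rule mult_le_mono1)
    finally show ?thesis using True by (simp add: multiset.map_comp comp_def)
  next
    case False
    let ?f = "\<lambda>p p' c c'. \<Sum>c''\<in>{1..n} - {c'}. reach_args n m l True p p' c c''"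
    have piece: "(\<Sum>x\<in>#?f p p' c c'. fsize x) \<le> n * ?T"
      if "?V p p'" "c \<in> {1..n}" "c' \<in> {1..n}" for p p' c c'
      using IH that by (intro sum_mset_sum_Diff_le) auto
    have "(\<Sum>x\<in>#reach_args n m (Suc l) sg s t a b. fsize x)
        = (\<Sum>X\<in>#(\<Sum>b'\<in>{1..n} - {b}. paths n ?f ?ps a b'). \<Sum>x\<in>#X. fsize x)"
      using False by (simp add: multiset.map_comp comp_def)
    also have "\<dots> \<le> n * (n ^ (?L - 2) * (?L - 1) * (n * ?T))"
      using paths_weight_le[OF V len Suc.prems(3) _ piece] by (intro sum_mset_sum_Diff_le) auto
    also have "\<dots> = n * (n ^ (?L - 2) * (?L - 1)) * n * ?T"
      by (simp add: algebra_simps)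
    also have "\<dots> \<le> m * n ^ (m + 1) * ?T"
      using factor by (rule mult_le_mono1)
    finally show ?thesis by simp
  qed
qed simp

definition matrix_perm :: "nat \<Rightarrow> (var \<Rightarrow> bool) \<Rightarrow> nat \<Rightarrow> nat \<Rightarrow> nat" where
  "matrix_perm n M i a = (THE b. b \<in> {1..n} \<and> M (i, a, b))"

lemma matrix_perm:
  assumes "in_domain n k M" "0 < i" "i \<le> k" "a \<in> {1..n}"
  shows "matrix_perm n M i a \<in> {1..n}"
    and "b \<in> {1..n} \<Longrightarrow> M (i, a, b) \<longleftrightarrow> matrix_perm n M i a = b"
proof -
  have "\<exists>!b. b \<in> {1..n} \<and> M (i, a, b)"
    using assms unfolding in_domain_def is_perm_matrix_def by auto
  then have "matrix_perm n M i a \<in> {1..n} \<and> M (i, a, matrix_perm n M i a)"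
    unfolding matrix_perm_def by (rule theI')
  then show "matrix_perm n M i a \<in> {1..n}" and "b \<in> {1..n} \<Longrightarrow> M (i, a, b) \<longleftrightarrow> matrix_perm n M i a = b"
    using \<open>\<exists>!b. b \<in> {1..n} \<and> M (i, a, b)\<close> by auto
qed

lemma prodmat_walk:
  assumes "in_domain n k M" "j \<le> k" "a \<in> {1..n}" "b \<in> {1..n}"
  shows "prodmat n M j a b = of_bool (walk (matrix_perm n M) 0 j a = b)"
  using assms(2,4)
proof (induction j arbitrary: b)
  case 0
  then show ?case by (simp add: walk_def)
next
  case (Suc j)
  let ?x = "walk (matrix_perm n M) 0 j a"
  have x: "?x \<in> {1..n}"
    using Suc.prems assms(3) by (intro walk_in matrix_perm(1)[OF assms(1)]) auto
  have "prodmat n M (Suc j) a b = (\<Sum>c=1..n. if ?x = c then of_bool (M (Suc j, c, b)) else 0)"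
    unfolding prodmat.simps using Suc by (intro sum.cong refl) auto
  also have "\<dots> = of_bool (M (Suc j, ?x, b))"
    using x by (subst sum.delta') auto
  also have "\<dots> = of_bool (matrix_perm n M (Suc j) ?x = b)"
    using matrix_perm(2)[OF assms(1) _ _ x] Suc.prems by simp
  also have "\<dots> = of_bool (walk (matrix_perm n M) 0 (Suc j) a = b)"
    using walk_trans[of 0 j "Suc j" "matrix_perm n M" a] by (simp add: walk_Suc)
  finally show ?case .
qed

lemma Word_iff_walk:
  "in_domain n k M \<Longrightarrow> 1 \<le> n \<Longrightarrow> Word n k M \<longleftrightarrow> walk (matrix_perm n M) 0 k 1 = 1"
  using prodmat_walk[of n k M k 1 1] by (simp add: Word_def)

lemma gcomp_permutes: "group_elem n k g \<Longrightarrow> p \<le> k \<Longrightarrow> gcomp k g p permutes {1..n}"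
  unfolding gcomp_def group_elem_def by (auto simp: permutes_id)

definition word_formula :: "nat \<Rightarrow> nat \<Rightarrow> nat \<Rightarrow> nat \<Rightarrow> bool \<Rightarrow> var acf" where
  "word_formula n k m d sg = gate sg (reach_args n m d sg 0 k 1 1)"

lemma word_formula_correct:
  assumes "1 \<le> n" "1 \<le> k" "k \<le> m ^ d"
  shows "depth (word_formula n k m d sg) \<le> d + 1"
    and "invariant n k (word_formula n k m d sg)"
    and "computes_word n k (word_formula n k m d sg)"
    and "fsize (word_formula n k m d sg) \<le> (m * n ^ (m + 1)) ^ d"
proof -
  have seg: "0 < k" "k - 0 \<le> m ^ d" and one: "1 \<in> {1..n}" using assms by auto
  have args: "depth x \<le> d \<and> set_acf x \<subseteq> valid_vars n k" if "x \<in># reach_args n m d sg 0 k 1 1" for x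
    using reach_args_depth_vars[OF seg(1) order_refl seg(2) one one that] .
  then show "depth (word_formula n k m d sg) \<le> d + 1"
    by (cases sg) (auto simp: word_formula_def Max_le_iff)
  show "invariant n k (word_formula n k m d sg)"
    unfolding invariant_def
  proof (intro allI impI)
    fix g assume "group_elem n k g"
    \<comment> \<open>\<open>g\<^sub>0 = g\<^sub>k = id\<close> fixes the endpoint labels \<open>1, 1\<close>.\<close>
    then have "image_mset (map_acf (act k g)) (reach_args n m d sg 0 k 1 1) = reach_args n m d sg 0 k 1 1"
      using image_reach_args[OF _ seg one one, of k g] gcomp_permutes by (simp add: gcomp_def)
    then show "map_acf (act k g) (word_formula n k m d sg) = word_formula n k m d sg"
      by (cases sg) (simp_all add: word_formula_def)
  qed
  have "eval M (word_formula n k m d sg) \<longleftrightarrow> Word n k M" if M: "in_domain n k M" for M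
    using eval_reach_args[OF matrix_perm[OF M] seg(1) order_refl seg(2) one one]
      Word_iff_walk[OF M assms(1)] by (simp add: word_formula_def)
  moreover have "set_acf (word_formula n k m d sg) \<subseteq> valid_vars n k"
    using args by (cases sg) (auto simp: word_formula_def)
  ultimately show "computes_word n k (word_formula n k m d sg)"
    by (simp add: computes_word_def)
  show "fsize (word_formula n k m d sg) \<le> (m * n ^ (m + 1)) ^ d"
    using fsize_reach_args[OF seg(1,2) one one, of sg] by (cases sg) (simp_all add: word_formula_def)
qed

lemma gate_is_Sigma_Pi:
  "depth (gate sg X) \<le> D \<Longrightarrow> (if sg then is_Sigma D (gate sg X) else is_Pi D (gate sg X))"
  by (cases sg) (simp_all add: is_Sigma_def is_Pi_def)

lemma Word_if_n_eq_1:
  assumes "in_domain 1 k M"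
  shows "Word 1 k M"
proof -
  have "walk (matrix_perm 1 M) 0 k 1 \<in> {1..1}"
    by (intro walk_in matrix_perm(1)[OF assms]) auto
  then show ?thesis using Word_iff_walk[OF assms] by simp
qed

lemma ceiling_root_bounds:
  fixes k d :: nat
  assumes "1 \<le> k" "1 \<le> d"
  defines "r \<equiv> real k powr (1 / real d)"
  shows "1 \<le> r" "k \<le> nat \<lceil>r\<rceil> ^ d" "real (nat \<lceil>r\<rceil>) \<le> 2 * r"
proof -
  show r1: "1 \<le> r" unfolding r_def using assms by (intro ge_one_powr_ge_zero) auto
  have "real k = r ^ d"
    using assms r1 by (simp add: r_def powr_realpow[symmetric] powr_powr)
  also have "\<dots> \<le> real (nat \<lceil>r\<rceil>) ^ d" using r1 by (intro power_mono) linarith+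
  finally show "k \<le> nat \<lceil>r\<rceil> ^ d" by (simp only: of_nat_le_iff of_nat_power[symmetric])
  show "real (nat \<lceil>r\<rceil>) \<le> 2 * r" using r1 by linarith
qed

lemma level_factor_pow_le:
  assumes "2 \<le> n" "1 \<le> m"
  shows "(m * n ^ (m + 1)) ^ d \<le> n ^ (3 * m * d)"
proof -
  have "m < 2 ^ m" by (rule less_exp)
  also have "(2::nat) ^ m \<le> n ^ m" using assms by (intro power_mono) auto
  finally have "m * n ^ (m + 1) \<le> n ^ m * n ^ (m + 1)" by simp
  also have "\<dots> = n ^ (2 * m + 1)" by (simp add: power_add[symmetric] mult_2)
  also have "\<dots> \<le> n ^ (3 * m)" using assms by (intro power_increasing) auto
  finally show ?thesis by (simp add: power_mult power_mono)
qed

lemma bounded_depth_word_formula: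
  assumes "1 \<le> n" "1 \<le> k" "1 \<le> d"
  shows "\<exists>F. (if sg then is_Sigma (d + 1) F else is_Pi (d + 1) F) \<and> invariant n k F \<and>
    computes_word n k F \<and> real (fsize F) \<le> real n powr (6 * real d * real k powr (1 / real d))"
proof (cases "n = 1")
  case True
  \<comment> \<open>The size bound is then \<open>1\<close>, too small for a literal, but \<open>Word\<close> is constantly true.\<close>
  let ?F = "gate sg {#Const True#}"
  have "(if sg then is_Sigma (d + 1) ?F else is_Pi (d + 1) ?F) \<and> invariant n k ?F \<and> computes_word n k ?F
      \<and> real (fsize ?F) \<le> real n powr (6 * real d * real k powr (1 / real d))"
    using True Word_if_n_eq_1 by (cases sg) (auto simp: is_Sigma_def is_Pi_def invariant_def computes_word_def)
  then show ?thesis by blast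
next
  case False
  define r where "r = real k powr (1 / real d)"
  define m where "m = nat \<lceil>r\<rceil>"
  note r = ceiling_root_bounds[OF assms(2,3), folded r_def, folded m_def]
  have "1 \<le> m" using r(2) assms(2,3) by (cases "m = 0") (auto simp: power_0_left)
  let ?F = "word_formula n k m d sg"
  have "fsize ?F \<le> (m * n ^ (m + 1)) ^ d"
    by (rule word_formula_correct(4)[OF assms(1,2) r(2)])
  also have "\<dots> \<le> n ^ (3 * m * d)"
    using False assms(1) \<open>1 \<le> m\<close> by (intro level_factor_pow_le) auto
  finally have "real (fsize ?F) \<le> real n ^ (3 * m * d)"
    by (simp only: of_nat_le_iff of_nat_power[symmetric])
  also have "\<dots> = real n powr (3 * real m * real d)"
    using assms(1) by (simp add: powr_realpow[symmetric])
  also have "\<dots> \<le> real n powr (6 * real d * r)"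
  proof (rule powr_mono)
    show "3 * real m * real d \<le> 6 * real d * r"
      using mult_right_mono[OF r(3), of "real d"] by (simp add: algebra_simps)
  qed (use assms(1) in simp)
  moreover have "if sg then is_Sigma (d + 1) ?F else is_Pi (d + 1) ?F"
    using word_formula_correct(1)[OF assms(1,2) r(2), of sg] unfolding word_formula_def by (rule gate_is_Sigma_Pi)
  ultimately show ?thesis
    using word_formula_correct(2,3)[OF assms(1,2) r(2), of sg] unfolding r_def by (intro exI[of _ ?F]) simp
qed

lemma log_depth_word_formula:
  assumes "1 \<le> n" "1 \<le> k"
  shows "\<exists>F. invariant n k F \<and> computes_word n k F \<and>
    real (fsize F) \<le> real n powr (12 * (1 + log 2 (real k))) \<and> real (depth F) \<le> 12 * (1 + log 2 (real k))"
proof -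
  define L where "L = log 2 (real k)"
  define d where "d = max 1 (nat \<lceil>L\<rceil>)"
  have "0 \<le> L" unfolding L_def using assms by simp
  then have "real (nat \<lceil>L\<rceil>) = of_int \<lceil>L\<rceil>" by simp
  then have "1 \<le> d" "L \<le> real d" "real d \<le> 1 + L"
    unfolding d_def using \<open>0 \<le> L\<close> by (auto simp: of_nat_max) linarith+
  have "real k = 2 powr L" unfolding L_def using assms by simp
  also have "\<dots> \<le> 2 powr real d" using \<open>L \<le> real d\<close> by (intro powr_mono) auto
  finally have "real k powr (1 / real d) \<le> (2 powr real d) powr (1 / real d)"
    using assms by (intro powr_mono2) auto
  also have "\<dots> = 2" using \<open>1 \<le> d\<close> by (simp add: powr_powr)
  finally have "6 * real d * real k powr (1 / real d) \<le> 6 * real d * 2"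
    by (intro mult_left_mono) auto
  then have mono: "real n powr (6 * real d * real k powr (1 / real d)) \<le> real n powr (12 * (1 + L))"
    using assms \<open>real d \<le> 1 + L\<close> by (intro powr_mono) auto
  obtain F where F: "is_Sigma (d + 1) F" "invariant n k F" "computes_word n k F"
    "real (fsize F) \<le> real n powr (6 * real d * real k powr (1 / real d))"
    using bounded_depth_word_formula[OF assms \<open>1 \<le> d\<close>, of True] by auto
  moreover have "real (depth F) \<le> 12 * (1 + L)"
    using F(1) \<open>real d \<le> 1 + L\<close> \<open>0 \<le> L\<close> by (simp add: is_Sigma_def)
  ultimately have "invariant n k F \<and> computes_word n k F \<and>
      real (fsize F) \<le> real n powr (12 * (1 + L)) \<and> real (depth F) \<le> 12 * (1 + L)"
    using order_trans[OF F(4) mono] by blast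
  then show ?thesis unfolding L_def by blast
qed

theorem corollary3p2:
  shows "\<exists>C::real. C > 0 \<and>
     (\<forall>n k d::nat. n \<ge> 1 \<longrightarrow> k \<ge> 1 \<longrightarrow> d \<ge> 1 \<longrightarrow>
        (\<exists>F. is_Sigma (d+1) F \<and> invariant n k F \<and> computes_word n k F \<and>
              real (fsize F) \<le> real n powr (C * real d * real k powr (1 / real d))) \<and>
        (\<exists>F. is_Pi (d+1) F \<and> invariant n k F \<and> computes_word n k F \<and>
              real (fsize F) \<le> real n powr (C * real d * real k powr (1 / real d)))) \<and>
     (\<forall>n k::nat. n \<ge> 1 \<longrightarrow> k \<ge> 1 \<longrightarrow>
        (\<exists>F. invariant n k F \<and> computes_word n k F \<and>
              real (fsize F) \<le> real n powr (C * (1 + log 2 (real k))) \<and>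
              real (depth F) \<le> C * (1 + log 2 (real k))))"
proof (intro exI[of _ 12] conjI allI impI)
  fix n k d :: nat assume nkd: "n \<ge> 1" "k \<ge> 1" "d \<ge> 1"
  then have "real n powr (6 * real d * real k powr (1 / real d))
      \<le> real n powr (12 * real d * real k powr (1 / real d))"
    by (intro powr_mono) auto
  note weaken = order_trans[OF _ this]
  show "\<exists>F. is_Sigma (d+1) F \<and> invariant n k F \<and> computes_word n k F \<and>
      real (fsize F) \<le> real n powr (12 * real d * real k powr (1 / real d))"
    using bounded_depth_word_formula[OF nkd, of True] weaken by auto
  show "\<exists>F. is_Pi (d+1) F \<and> invariant n k F \<and> computes_word n k F \<and>
      real (fsize F) \<le> real n powr (12 * real d * real k powr (1 / real d))"
    using bounded_depth_word_formula[OF nkd, of False] weaken by auto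
next
  fix n k :: nat assume "n \<ge> 1" "k \<ge> 1"
  then show "\<exists>F. invariant n k F \<and> computes_word n k F \<and>
      real (fsize F) \<le> real n powr (12 * (1 + log 2 (real k))) \<and>
      real (depth F) \<le> 12 * (1 + log 2 (real k))"
    by (rule log_depth_word_formula)
qed simp

end
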